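(* Let $Q\subset\mathbb{C}$ be an unshielded continuum with finest map $\varphi$ onto a locally connected continuum. If $a\in Q$ satisfies $\varphi^{-1}(\varphi(a))=\{a\}$, then $Q$ is locally connected at $a$.
   Context: $Q$ is unshielded if it equals the boundary of the component of $\widehat{\mathbb{C}}\setminus Q$ containing $\infty$. The finest map $\varphi$ of $Q$ is the monotone (continuous, connected fibers) surjection onto a locally connected continuum through which every monotone surjection of $Q$ onto a locally connected continuum factors via a monotone map. *)

theory Defs
  imports "HOL-Analysis.Analysis"
begin

definition continuum :: "'a::topological_space set \<Rightarrow> bool" where
  "continuum S \<longleftrightarrow> compact S \<and> connected S \<and> S \<noteq> {}"

definition lc_continuum :: "'a::topological_space set \<Rightarrow> bool" where
  "lc_continuum S \<longleftrightarrow> continuum S \<and> locally connected S"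

definition monotone_map :: "'a::topological_space set \<Rightarrow> ('a \<Rightarrow> 'b::topological_space) \<Rightarrow> 'b set \<Rightarrow> bool" where
  "monotone_map X f Y \<longleftrightarrow> continuous_on X f \<and> f ` X = Y \<and>
      (\<forall>y\<in>Y. connected {x\<in>X. f x = y})"

text \<open>Q is unshielded: Q is the boundary of the component of the complement of Q
  containing infinity, i.e. of the unbounded component of the complement in the plane.\<close>
definition unshielded :: "complex set \<Rightarrow> bool" where
  "unshielded Q \<longleftrightarrow> (\<exists>U. U \<in> components (- Q) \<and> \<not> bounded U \<and> Q = frontier U)"

definition finest_map :: "complex set \<Rightarrow> (complex \<Rightarrow> 'b::metric_space) \<Rightarrow> 'b set \<Rightarrow> bool" where
  "finest_map Q \<phi> Y \<longleftrightarrow> lc_continuum Y \<and> monotone_map Q \<phi> Y \<and>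
     (\<forall>(\<psi>::complex \<Rightarrow> 'b) Z. lc_continuum Z \<and> monotone_map Q \<psi> Z \<longrightarrow>
        (\<exists>h. monotone_map Y h Z \<and> (\<forall>x\<in>Q. \<psi> x = h (\<phi> x))))"

end

theory Submission
  imports Defs
begin

text \<open>Only two properties of the finest map are used: it is monotone and its target is
  locally connected. A continuous map on a compact set is closed, and a closed map with connected
  fibres pulls connected sets back to connected sets; so a small connected open neighbourhood of
  \<open>\<phi> a\<close> pulls back to a connected open neighbourhood of \<open>a\<close>. Since the fibre over
  \<open>\<phi> a\<close> is just \<open>{a}\<close>, closedness lets us choose that neighbourhood so that its pullback
  lies in any prescribed neighbourhood of \<open>a\<close>.\<close>

lemma closed_map_preimage_within_open:
  assumes closed_map: "\<And>C. closedin (top_of_set S) C \<Longrightarrow> closedin (top_of_set T) (f ` C)"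
    and "openin (top_of_set S) W" and "y \<in> T" and "S \<inter> f -` {y} \<subseteq> W"
  shows "\<exists>V. openin (top_of_set T) V \<and> y \<in> V \<and> S \<inter> f -` V \<subseteq> W"
proof (intro exI conjI)
  have "closedin (top_of_set S) (S - W)"
    using assms(2) by (simp add: closedin_diff)
  then show "openin (top_of_set T) (T - f ` (S - W))"
    using closed_map by (simp add: openin_diff)
  show "y \<in> T - f ` (S - W)"
    using assms(3,4) by auto
  show "S \<inter> f -` (T - f ` (S - W)) \<subseteq> W"
    by auto
qed

lemma locally_connected_at_monotone_singleton_fibre:
  fixes f :: "'a::t2_space \<Rightarrow> 'b::t2_space"
  assumes "compact S" and "monotone_map S f T" and "locally connected T"
    and "a \<in> S" and "{x\<in>S. f x = f a} = {a}"
  shows "locally_connected_at a (top_of_set S)"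
proof -
  have contf: "continuous_on S f" and fim: "f ` S = T"
    using assms(2) by (auto simp: monotone_map_def)
  have fibres: "connected (S \<inter> f -` {y})" if "y \<in> T" for y
  proof -
    have "S \<inter> f -` {y} = {x\<in>S. f x = y}"
      by auto
    then show ?thesis
      using assms(2) that by (simp add: monotone_map_def)
  qed
  have closed_map: "\<And>C. closedin (top_of_set S) C \<Longrightarrow> closedin (top_of_set T) (f ` C)"
    using Abstract_Topology_2.continuous_imp_closed_map contf fim \<open>compact S\<close> by metis
  have "\<exists>P. openin (top_of_set S) P \<and> connected P \<and> a \<in> P \<and> P \<subseteq> W"
    if W: "openin (top_of_set S) W" "a \<in> W" for W
  proof -
    have "S \<inter> f -` {f a} \<subseteq> W"
      using assms(5) W(2) by auto
    then obtain V where V: "openin (top_of_set T) V" "f a \<in> V" "S \<inter> f -` V \<subseteq> W"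
      using closed_map_preimage_within_open[OF closed_map W(1)] assms(4) fim by blast
    then obtain U where U: "openin (top_of_set T) U" "connected U" "f a \<in> U" "U \<subseteq> V"
      using \<open>locally connected T\<close> unfolding locally_connected by blast
    have "openin (top_of_set S) (S \<inter> f -` U)"
      using continuous_openin_preimage[OF contf _ U(1)] fim by blast
    moreover have "connected (S \<inter> f -` U)"
      using connected_closed_monotone_preimage[OF contf fim closed_map fibres U(2)]
        U(1) openin_imp_subset by blast
    ultimately show ?thesis
      using U(3,4) V(3) assms(4) by blast
  qed
  then show ?thesis
    unfolding locally_connected_at_def
    by (subst open_neighbourhood_base_at) (auto simp: connectedin_subtopology, meson openin_imp_subset)
qed

theorem lemma3p7:
  fixes Q :: "complex set" and \<phi> :: "complex \<Rightarrow> 'b::metric_space" and Y :: "'b set" and a :: complex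
  assumes "continuum Q" and "unshielded Q" and "finest_map Q \<phi> Y"
    and "a \<in> Q" and "{x\<in>Q. \<phi> x = \<phi> a} = {a}"
  shows "locally_connected_at a (top_of_set Q)"
proof (rule locally_connected_at_monotone_singleton_fibre)
  show "compact Q"
    using assms(1) by (simp add: continuum_def)
  show "monotone_map Q \<phi> Y" and "locally connected Y"
    using assms(3) by (auto simp: finest_map_def lc_continuum_def)
qed (use assms(4,5) in auto)

end
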